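(* Let $X$ be a locally compact metrizable space, $F$ a discrete multivalued dynamical system on $X$ and $N$ an isolating neighborhood for $F$. Then for every $n\in\mathbb{N}$ there exist weak index pairs $P^1,\dots,P^n$ in $N$ such that $P^i_1\subset\operatorname{int}_N P^{i+1}_1$ and $P^i_2\subset\operatorname{int}_N P^{i+1}_2$ for $i=1,\dots,n-1$.
   Context: A discrete multivalued dynamical system (dmds) on $X$ is a usc map $F:X\times\mathbb{Z}\multimap X$ with compact values such that $F(x,0)=\{x\}$; $F(F(x,n),m)=F(x,n+m)$ whenever $nm\ge0$; $y\in F(x,-1)\iff x\in F(y,1)$; it is identified with its generator $F=F(\cdot,1)$. A solution through $x$ on an interval $I\ni0$ of $\mathbb{Z}$ is $\sigma:I\to X$ with $\sigma(0)=x$, $\sigma(n+1)\in F(\sigma(n))$; $\operatorname{Inv}N$ is the set of $x\in N$ with a solution $\sigma:\mathbb{Z}\to N$ through $x$. A compact $N$ is an isolating neighborhood if $\operatorname{Inv}N\subset\operatorname{int}N$. With $\operatorname{bd}_FA:=\operatorname{cl}A\cap\operatorname{cl}(F(A)\setminus A)$, a weak index pair in $N$ is a pair of compact sets $P_2\subset P_1\subset N$ with (a) $F(P_i)\cap N\subset P_i$ for $i=1,2$, (b) $\operatorname{bd}_FP_1\subset P_2$, (c) $\operatorname{Inv}N\subset\operatorname{int}(P_1\setminus P_2)$, (d) $P_1\setminus P_2\subset\operatorname{int}N$. $\operatorname{int}_N$ denotes interior relative to $N$. *)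

theory Defs
  imports "HOL-Analysis.Analysis"
begin

text \<open>A multivalued map F : X x Z -o X is represented as F :: 'a => int => 'a set,
  with F x n standing for F(x,n). The space X is the type 'a (a metric space).\<close>

definition usc_map :: "('b::topological_space \<Rightarrow> 'a::topological_space set) \<Rightarrow> bool" where
  "usc_map G \<longleftrightarrow> (\<forall>z U. open U \<and> G z \<subseteq> U \<longrightarrow>
      (\<exists>W. open W \<and> z \<in> W \<and> (\<forall>w\<in>W. G w \<subseteq> U)))"

definition dmds :: "('a::metric_space \<Rightarrow> int \<Rightarrow> 'a set) \<Rightarrow> bool" where
  "dmds F \<longleftrightarrow>
     usc_map (\<lambda>(x, n). F x n) \<and>
     (\<forall>x n. compact (F x n)) \<and>
     (\<forall>x. F x 0 = {x}) \<and>
     (\<forall>x n m. n * m \<ge> 0 \<longrightarrow> (\<Union>y\<in>F x n. F y m) = F x (n + m)) \<and>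
     (\<forall>x y. y \<in> F x (-1) \<longleftrightarrow> x \<in> F y 1)"

definition img :: "('a \<Rightarrow> int \<Rightarrow> 'a set) \<Rightarrow> 'a set \<Rightarrow> 'a set" where
  "img F A = (\<Union>x\<in>A. F x 1)"

definition Inv :: "('a \<Rightarrow> int \<Rightarrow> 'a set) \<Rightarrow> 'a set \<Rightarrow> 'a set" where
  "Inv F N = {x \<in> N. \<exists>\<sigma>::int \<Rightarrow> 'a. \<sigma> 0 = x \<and> (\<forall>n. \<sigma> n \<in> N) \<and>
                        (\<forall>n. \<sigma> (n + 1) \<in> F (\<sigma> n) 1)}"

definition isolating_nbhd :: "('a::metric_space \<Rightarrow> int \<Rightarrow> 'a set) \<Rightarrow> 'a set \<Rightarrow> bool" where
  "isolating_nbhd F N \<longleftrightarrow> compact N \<and> Inv F N \<subseteq> interior N"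

definition bdF :: "('a::metric_space \<Rightarrow> int \<Rightarrow> 'a set) \<Rightarrow> 'a set \<Rightarrow> 'a set" where
  "bdF F A = closure A \<inter> closure (img F A - A)"

definition weak_index_pair ::
    "('a::metric_space \<Rightarrow> int \<Rightarrow> 'a set) \<Rightarrow> 'a set \<Rightarrow> 'a set \<Rightarrow> 'a set \<Rightarrow> bool" where
  "weak_index_pair F N P1 P2 \<longleftrightarrow>
     compact P1 \<and> compact P2 \<and> P2 \<subseteq> P1 \<and> P1 \<subseteq> N \<and>
     img F P1 \<inter> N \<subseteq> P1 \<and> img F P2 \<inter> N \<subseteq> P2 \<and>
     bdF F P1 \<subseteq> P2 \<and>
     Inv F N \<subseteq> interior (P1 - P2) \<and>
     P1 - P2 \<subseteq> interior N"

definition intN :: "'a::topological_space set \<Rightarrow> 'a set \<Rightarrow> 'a set" where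
  "intN N A = (top_of_set N) interior_of A"

end

theory Submission imports Defs begin

text \<open>Write \<open>fwd C j\<close> for the endpoints of \<open>j\<close>-step trajectories in \<open>N\<close> starting in \<open>C\<close>
  and \<open>bwd Z i\<close> for the starting points of \<open>i\<close>-step trajectories in \<open>N\<close> ending in \<open>Z\<close>.
  Upper semicontinuity and compactness give \<open>Inv N = (\<Inter>k. fwd N k) \<inter> (\<Inter>k. bwd N k)\<close>, so
  isolation yields a time \<open>m\<close> at which no frontier point of \<open>N\<close> lies in \<open>fwd N m \<inter> bwd N m\<close>.
  For a compact neighbourhood \<open>K\<close> of \<open>Inv N\<close> whose orbit pieces avoid the frontier points of
  \<open>bwd N m\<close>, the set \<open>P\<^sub>1 = (\<Union>j<m. fwd K j) \<union> fwd N m\<close> is positively invariant in \<open>N\<close>,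
  and \<open>P\<^sub>2\<close>, the orbit piece of a compact \<open>L \<subseteq> P\<^sub>1\<close> containing \<open>P\<^sub>1 \<inter> frontier N\<close> but
  missing \<open>bwd N m\<close>, is positively invariant too; this is a weak index pair.
  These conditions are open in \<open>K\<close> and \<open>L\<close>: replacing \<open>K\<close> by a small closed
  \<open>\<delta>\<close>-neighbourhood of \<open>P\<^sub>1\<close> in \<open>N\<close> and \<open>L\<close> by a neighbourhood of \<open>P\<^sub>2\<close> preserves them, by a
  nested-compact-sets argument, and puts the old pair into the relative interior of the new one.
  Iterating gives an infinite nested sequence.\<close>

lemma compact_decseq_Inter_nonempty:
  fixes C :: "nat \<Rightarrow> 'a::t2_space set"
  assumes "\<And>k. compact (C k)" and "decseq C" and "\<And>k. C k \<noteq> {}"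
  shows "(\<Inter>k. C k) \<noteq> {}"
proof -
  have "compact_space (top_of_set (C 0))"
    using assms(1) by (simp add: compact_space_subtopology)
  moreover have "closedin (top_of_set (C 0)) (C k)" for k
    using assms(1) decseqD[OF assms(2), of 0 k] by (simp add: closed_subset compact_imp_closed)
  ultimately show ?thesis
    using compact_space_imp_nest assms(2,3) by blast
qed

lemma compact_decseq_eventually_empty:
  fixes C :: "nat \<Rightarrow> 'a::t2_space set"
  assumes "\<And>k. compact (C k)" and "decseq C" and "(\<Inter>k. C k) = {}"
  shows "eventually (\<lambda>k. C k = {}) sequentially"
proof (rule ccontr)
  assume never_empty: "\<not> eventually (\<lambda>k. C k = {}) sequentially"
  have "C k \<noteq> {}" for k
  proof
    assume "C k = {}"
    then have "\<forall>n\<ge>k. C n = {}"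
      using decseqD[OF assms(2), of k] by auto
    then show False
      using never_empty unfolding eventually_sequentially by blast
  qed
  then show False
    using compact_decseq_Inter_nonempty[OF assms(1,2)] assms(3) by blast
qed

lemma closed_meets_usc_map:
  assumes "usc_map G" and "closed C"
  shows "closed {y. G y \<inter> C \<noteq> {}}"
proof -
  have "\<exists>W. open W \<and> y \<in> W \<and> W \<subseteq> {y. G y \<subseteq> - C}" if "y \<in> {y. G y \<subseteq> - C}" for y
  proof -
    have "open (- C) \<and> G y \<subseteq> - C"
      using assms(2) that by auto
    then obtain W where "open W" "y \<in> W" "\<forall>w\<in>W. G w \<subseteq> - C"
      using assms(1)[unfolded usc_map_def, rule_format, of "- C" y] by blast
    then show ?thesis by blast
  qed
  then have "open {y. G y \<subseteq> - C}"
    by (subst open_subopen) (rule ballI)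
  moreover have "{y. G y \<inter> C \<noteq> {}} = - {y. G y \<subseteq> - C}" by blast
  ultimately show ?thesis
    by (simp add: closed_open)
qed

lemma usc_map_slice:
  assumes "usc_map (\<lambda>(x, n). G x n)"
  shows "usc_map (\<lambda>x. G x n)"
  unfolding usc_map_def
proof (intro allI impI)
  fix x U assume xU: "open U \<and> G x n \<subseteq> U"
  have H: "usc_map (\<lambda>p. G (fst p) (snd p))"
    using assms by (simp add: case_prod_beta')
  have "\<exists>W. open W \<and> (x, n) \<in> W \<and> (\<forall>w\<in>W. G (fst w) (snd w) \<subseteq> U)"
    using H[unfolded usc_map_def, THEN spec, THEN spec, THEN mp, of U "(x, n)"] xU by simp
  then obtain W where W: "open W" "(x, n) \<in> W" "\<forall>w\<in>W. G (fst w) (snd w) \<subseteq> U"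
    by blast
  obtain A B where A: "open A" "open B" "(x, n) \<in> A \<times> B" "A \<times> B \<subseteq> W"
    by (rule open_prod_elim[OF W(1,2)])
  have "G w n \<subseteq> U" if "w \<in> A" for w
    using W(3) A(3,4) that by (metis SigmaE2 SigmaI fst_conv snd_conv subsetD)
  then show "\<exists>A. open A \<and> x \<in> A \<and> (\<forall>w\<in>A. G w n \<subseteq> U)"
    using A(1,3) by blast
qed

lemma closed_nbhd_avoiding:
  fixes P A :: "'a::metric_space set"
  assumes "compact P" and "closed A" and "P \<inter> A = {}"
  shows "\<exists>E \<eta>. closed E \<and> E \<inter> A = {} \<and> \<eta> > 0 \<and> (\<forall>x\<in>P. ball x \<eta> \<subseteq> E)"
proof -
  consider "A = {}" | "P = {}" | "A \<noteq> {}" "P \<noteq> {}" by blast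
  then show ?thesis
  proof cases
    case 1
    then show ?thesis by (intro exI[of _ UNIV] exI[of _ 1]) simp
  next
    case 2
    then show ?thesis by (intro exI[of _ "{}"] exI[of _ 1]) simp
  next
    case 3
    have "continuous_on P (\<lambda>x. infdist x A)"
      by (intro continuous_intros)
    then obtain x0 where x0: "x0 \<in> P" "\<And>y. y \<in> P \<Longrightarrow> infdist x0 A \<le> infdist y A"
      using continuous_attains_inf[OF assms(1) 3(2)] by blast
    define e where "e = infdist x0 A"
    have "e > 0"
      using x0(1) assms(2,3) 3(1) infdist_pos_not_in_closed unfolding e_def by blast
    define E where "E = {y. e/2 \<le> infdist y A}"
    have "closed E"
      unfolding E_def by (intro closed_Collect_le continuous_intros)
    moreover have "E \<inter> A = {}"
      unfolding E_def using \<open>e > 0\<close> by auto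
    moreover have "ball x (e/2) \<subseteq> E" if "x \<in> P" for x
    proof
      fix y assume "y \<in> ball x (e/2)"
      moreover have "infdist x A \<le> infdist y A + dist x y" by (rule infdist_triangle)
      moreover have "e \<le> infdist x A" using x0(2) that unfolding e_def .
      ultimately show "y \<in> E" unfolding E_def by simp
    qed
    ultimately show ?thesis
      using \<open>e > 0\<close> by (intro exI[of _ E] exI[of _ "e/2"]) simp
  qed
qed

lemma in_intN_ballI:
  fixes N A :: "'a::metric_space set"
  assumes "x \<in> N" and "e > 0" and "N \<inter> ball x e \<subseteq> A"
  shows "x \<in> intN N A"
proof -
  have "openin (top_of_set N) (N \<inter> ball x e)"
    by (simp add: openin_open_Int)
  moreover have "x \<in> N \<inter> ball x e"
    using assms(1,2) by simp
  ultimately show ?thesis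
    using assms(3) unfolding intN_def interior_of_def by blast
qed

lemma Inter_infdist_le_subset:
  fixes P :: "'a::metric_space set"
  assumes "closed P" and "P \<noteq> {}"
  shows "(\<Inter>k. {x. infdist x P \<le> 1 / Suc k}) \<subseteq> P"
proof
  fix x assume x: "x \<in> (\<Inter>k. {x. infdist x P \<le> 1 / Suc k})"
  have "infdist x P \<le> 0"
  proof (rule field_le_epsilon)
    fix e :: real assume "e > 0"
    then obtain k where "inverse (real (Suc k)) < e"
      using reals_Archimedean by blast
    moreover have "infdist x P \<le> 1 / Suc k"
      using x by blast
    ultimately show "infdist x P \<le> 0 + e"
      by (simp add: inverse_eq_divide)
  qed
  then have "infdist x P = 0"
    using infdist_nonneg[of x P] by linarith
  then have "x \<in> closure P"
    by (simp add: in_closure_iff_infdist_zero[OF assms(2)])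
  then show "x \<in> P"
    using assms(1) by simp
qed

lemma exists_nat_chain_in:
  assumes "x \<in> A" and "\<And>y. y \<in> A \<Longrightarrow> \<exists>z. z \<in> A \<and> R y z"
  shows "\<exists>f. f 0 = x \<and> (\<forall>n. f n \<in> A \<and> R (f n) (f (Suc n)))"
proof -
  have "\<exists>f. \<forall>n. (f n \<in> A \<and> (n = 0 \<longrightarrow> f n = x)) \<and> R (f n) (f (Suc n))"
    by (rule dependent_nat_choice) (use assms in blast)+
  then show ?thesis
    by blast
qed

lemma int_chain_from_nat_chains:
  fixes f g :: "nat \<Rightarrow> 'a"
  assumes "f 0 = g 0" and "\<And>n. R (f n) (f (Suc n))" and "\<And>n. R (g (Suc n)) (g n)"
  defines "\<sigma> \<equiv> \<lambda>n::int. if 0 \<le> n then f (nat n) else g (nat (- n))"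
  shows "R (\<sigma> n) (\<sigma> (n + 1))"
proof (cases "0 \<le> n")
  case True
  then show ?thesis
    using assms(2)[of "nat n"] unfolding \<sigma>_def by (simp add: nat_add_distrib)
next
  case False
  define m where "m = nat (- n - 1)"
  have "\<sigma> n = g (Suc m)"
    using False unfolding \<sigma>_def m_def by (simp add: Suc_nat_eq_nat_zadd1)
  moreover have "\<sigma> (n + 1) = g m"
    using False assms(1) unfolding \<sigma>_def m_def by (cases "n = -1") simp_all
  ultimately show ?thesis
    using assms(3) by simp
qed

locale isolated_dmds =
  fixes F :: "'a::metric_space \<Rightarrow> int \<Rightarrow> 'a set" and N :: "'a set"
  assumes dmds: "dmds F" and isolating: "isolating_nbhd F N"
begin

lemma compact_N: "compact N"
  using isolating unfolding isolating_nbhd_def by (rule conjunct1)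

lemma closed_N: "closed N"
  using compact_N by (rule compact_imp_closed)

lemma Inv_subset_interior: "Inv F N \<subseteq> interior N"
  using isolating unfolding isolating_nbhd_def by (rule conjunct2)

lemma frontier_N: "frontier N = N - interior N"
  by (simp add: frontier_def closed_N)

lemma compact_F: "compact (F x n)"
proof -
  have "\<forall>x n. compact (F x n)"
    using dmds unfolding dmds_def by (elim conjE) assumption
  then show ?thesis by blast
qed

lemma F_minus_one_iff: "y \<in> F x (-1) \<longleftrightarrow> x \<in> F y 1"
proof -
  have "\<forall>x y. y \<in> F x (-1) \<longleftrightarrow> x \<in> F y 1"
    using dmds unfolding dmds_def by (elim conjE) assumption
  then show ?thesis by blast
qed

lemma usc_F: "usc_map (\<lambda>x. F x n)"
proof -
  have "usc_map (\<lambda>(x, n). F x n)"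
    using dmds unfolding dmds_def by (elim conjE) assumption
  then show ?thesis by (rule usc_map_slice)
qed

definition preimg :: "'a set \<Rightarrow> 'a set" where
  "preimg C = {y. F y 1 \<inter> C \<noteq> {}}"

lemma img_eq: "img F C = {y. F y (-1) \<inter> C \<noteq> {}}"
  unfolding img_def using F_minus_one_iff by blast

lemma closed_img: "closed C \<Longrightarrow> closed (img F C)"
  unfolding img_eq by (rule closed_meets_usc_map[OF usc_F])

lemma closed_preimg: "closed C \<Longrightarrow> closed (preimg C)"
  unfolding preimg_def by (rule closed_meets_usc_map[OF usc_F])

primrec fwd :: "'a set \<Rightarrow> nat \<Rightarrow> 'a set" where
  "fwd C 0 = C"
| "fwd C (Suc j) = N \<inter> img F (fwd C j)"

primrec bwd :: "'a set \<Rightarrow> nat \<Rightarrow> 'a set" where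
  "bwd Z 0 = Z"
| "bwd Z (Suc i) = N \<inter> preimg (bwd Z i)"

lemma fwd_subset_N: "C \<subseteq> N \<Longrightarrow> fwd C j \<subseteq> N"
  by (induction j) auto

lemma bwd_subset_N: "Z \<subseteq> N \<Longrightarrow> bwd Z i \<subseteq> N"
  by (induction i) auto

lemma compact_fwd: "compact C \<Longrightarrow> C \<subseteq> N \<Longrightarrow> compact (fwd C j)"
  by (induction j) (auto intro: compact_Int_closed[OF compact_N] closed_img compact_imp_closed)

lemma compact_bwd: "compact Z \<Longrightarrow> Z \<subseteq> N \<Longrightarrow> compact (bwd Z i)"
  by (induction i) (auto intro: compact_Int_closed[OF compact_N] closed_preimg compact_imp_closed)

lemma fwd_mono: "C \<subseteq> D \<Longrightarrow> fwd C j \<subseteq> fwd D j"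
  by (induction j) (auto simp: img_def)

lemma decseq_fwd_N: "decseq (fwd N)"
proof (rule decseq_SucI)
  show "fwd N (Suc k) \<subseteq> fwd N k" for k
    by (induction k) (auto simp: img_def)
qed

lemma decseq_bwd_N: "decseq (bwd N)"
proof (rule decseq_SucI)
  show "bwd N (Suc k) \<subseteq> bwd N k" for k
    by (induction k) (auto simp: preimg_def)
qed

lemma fwd_subset_if_invariant: "img F P \<inter> N \<subseteq> P \<Longrightarrow> fwd P j \<subseteq> P"
  by (induction j) (auto simp: img_def)

lemma fwd_meets_bwd:
  assumes "C \<subseteq> N" and "y \<in> fwd C j" and "y \<in> bwd Z i"
  shows "\<exists>c\<in>C. c \<in> bwd Z (i + j)"
  using assms(2,3)
proof (induction j arbitrary: y i)
  case 0
  then show ?case by auto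
next
  case (Suc j)
  then obtain x where x: "x \<in> fwd C j" "y \<in> F x 1"
    by (auto simp: img_def)
  then have "x \<in> bwd Z (Suc i)"
    using Suc.prems(2) fwd_subset_N[OF assms(1)] by (auto simp: preimg_def)
  then obtain c where "c \<in> C" "c \<in> bwd Z (Suc i + j)"
    using Suc.IH[OF x(1)] by blast
  then show ?case
    by (auto simp only: add_Suc_shift)
qed

lemma bwd_meets_fwd_N:
  assumes "Z \<subseteq> N" and "x \<in> bwd Z i" and "x \<in> fwd N m"
  shows "\<exists>z\<in>Z. z \<in> fwd N (m + i)"
  using assms(2,3)
proof (induction i arbitrary: x m)
  case 0
  then show ?case by auto
next
  case (Suc i)
  then obtain z where z: "z \<in> bwd Z i" "z \<in> F x 1"
    by (auto simp: preimg_def)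
  then have "z \<in> fwd N (Suc m)"
    using Suc.prems(2) bwd_subset_N[OF assms(1)] by (auto simp: img_def)
  then obtain y where "y \<in> Z" "y \<in> fwd N (Suc m + i)"
    using Suc.IH[OF z(1)] by blast
  then show ?case
    by (auto simp only: add_Suc_shift)
qed


lemma solution_in_fwd_N:
  fixes \<sigma> :: "int \<Rightarrow> 'a"
  assumes "\<And>n. \<sigma> n \<in> N" and "\<And>n. \<sigma> (n + 1) \<in> F (\<sigma> n) 1"
  shows "\<sigma> n \<in> fwd N k"
proof (induction k arbitrary: n)
  case 0
  then show ?case using assms(1) by simp
next
  case (Suc k)
  have "\<sigma> n \<in> F (\<sigma> (n - 1)) 1"
    using assms(2)[of "n - 1"] by simp
  then show ?case
    using Suc.IH[of "n - 1"] assms(1) by (auto simp: img_def)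
qed

lemma solution_in_bwd_N:
  fixes \<sigma> :: "int \<Rightarrow> 'a"
  assumes "\<And>n. \<sigma> n \<in> N" and "\<And>n. \<sigma> (n + 1) \<in> F (\<sigma> n) 1"
  shows "\<sigma> n \<in> bwd N k"
proof (induction k arbitrary: n)
  case 0
  then show ?case using assms(1) by simp
next
  case (Suc k)
  then show ?case
    using Suc.IH[of "n + 1"] assms by (auto simp: preimg_def)
qed

lemma Inv_subset_fwd_N: "Inv F N \<subseteq> fwd N k"
  unfolding Inv_def using solution_in_fwd_N by blast

lemma Inv_subset_bwd_N: "Inv F N \<subseteq> bwd N k"
  unfolding Inv_def using solution_in_bwd_N by blast

lemma Inter_bwd_N_has_successor:
  assumes "x \<in> (\<Inter>k. bwd N k)"
  shows "\<exists>y. y \<in> (\<Inter>k. bwd N k) \<and> y \<in> F x 1"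
proof -
  have "(\<Inter>k. F x 1 \<inter> bwd N k) \<noteq> {}"
  proof (rule compact_decseq_Inter_nonempty)
    show "compact (F x 1 \<inter> bwd N k)" for k
      using compact_F compact_bwd[OF compact_N] by (simp add: compact_Int_closed compact_imp_closed)
    show "decseq (\<lambda>k. F x 1 \<inter> bwd N k)"
      using decseq_bwd_N unfolding decseq_def by blast
    show "F x 1 \<inter> bwd N k \<noteq> {}" for k
      using assms by (auto simp: preimg_def dest: spec[of _ "Suc k"])
  qed
  then obtain y where "\<forall>k. y \<in> F x 1 \<and> y \<in> bwd N k"
    by blast
  then show ?thesis
    by blast
qed

lemma Inter_fwd_N_has_predecessor:
  assumes "x \<in> (\<Inter>k. fwd N k)"
  shows "\<exists>w. w \<in> (\<Inter>k. fwd N k) \<and> x \<in> F w 1"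
proof -
  have "(\<Inter>k. F x (-1) \<inter> fwd N k) \<noteq> {}"
  proof (rule compact_decseq_Inter_nonempty)
    show "compact (F x (-1) \<inter> fwd N k)" for k
      using compact_F compact_fwd[OF compact_N] by (simp add: compact_Int_closed compact_imp_closed)
    show "decseq (\<lambda>k. F x (-1) \<inter> fwd N k)"
      using decseq_fwd_N unfolding decseq_def by blast
    show "F x (-1) \<inter> fwd N k \<noteq> {}" for k
      using assms by (auto simp: img_eq dest: spec[of _ "Suc k"])
  qed
  then obtain w where "\<forall>k. w \<in> F x (-1) \<and> w \<in> fwd N k"
    by blast
  then show ?thesis
    using F_minus_one_iff by blast
qed

lemma Inv_eq: "Inv F N = (\<Inter>k. fwd N k) \<inter> (\<Inter>k. bwd N k)"
proof
  show "Inv F N \<subseteq> (\<Inter>k. fwd N k) \<inter> (\<Inter>k. bwd N k)"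
    using Inv_subset_fwd_N Inv_subset_bwd_N by blast
next
  show "(\<Inter>k. fwd N k) \<inter> (\<Inter>k. bwd N k) \<subseteq> Inv F N"
  proof
    fix x assume x: "x \<in> (\<Inter>k. fwd N k) \<inter> (\<Inter>k. bwd N k)"
    have "x \<in> (\<Inter>k. bwd N k)"
      using x by blast
    then obtain f where f: "f 0 = x" "\<forall>n. f n \<in> (\<Inter>k. bwd N k) \<and> f (Suc n) \<in> F (f n) 1"
      using exists_nat_chain_in[where R = "\<lambda>y z. z \<in> F y 1", OF _ Inter_bwd_N_has_successor] by auto
    have "x \<in> (\<Inter>k. fwd N k)"
      using x by blast
    then obtain g where g: "g 0 = x" "\<forall>n. g n \<in> (\<Inter>k. fwd N k) \<and> g n \<in> F (g (Suc n)) 1"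
      using exists_nat_chain_in[where R = "\<lambda>y w. y \<in> F w 1", OF _ Inter_fwd_N_has_predecessor] by auto
    have f_succ: "f (Suc n) \<in> F (f n) 1" and f_N: "f n \<in> bwd N 0" for n
      using f(2) by blast+
    have g_pred: "g n \<in> F (g (Suc n)) 1" and g_N: "g n \<in> fwd N 0" for n
      using g(2) by blast+
    define \<sigma> where "\<sigma> n = (if 0 \<le> n then f (nat n) else g (nat (- n)))" for n :: int
    have "\<sigma> (n + 1) \<in> F (\<sigma> n) 1" for n
      using int_chain_from_nat_chains[of f g "\<lambda>y z. z \<in> F y 1", OF _ f_succ g_pred] f(1) g(1)
      unfolding \<sigma>_def by simp
    moreover have "\<sigma> n \<in> N" for n
      using f_N g_N unfolding \<sigma>_def by simp
    moreover have "\<sigma> 0 = x"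
      using f(1) unfolding \<sigma>_def by simp
    ultimately show "x \<in> Inv F N"
      unfolding Inv_def by blast
  qed
qed

lemma compact_Inv: "compact (Inv F N)"
proof -
  have "closed (Inv F N)"
    unfolding Inv_eq
    using compact_fwd[OF compact_N] compact_bwd[OF compact_N]
    by (intro closed_Int closed_INT) (auto intro: compact_imp_closed)
  moreover have "Inv F N \<subseteq> N"
    unfolding Inv_def by blast
  ultimately show ?thesis
    using compact_Int_closed[OF compact_N, of "Inv F N"] by (simp add: Int_absorb1)
qed

lemma eventually_frontier_disjoint:
  "eventually (\<lambda>m. frontier N \<inter> fwd N m \<inter> bwd N m = {}) sequentially"
proof (rule compact_decseq_eventually_empty)
  show "compact (frontier N \<inter> fwd N m \<inter> bwd N m)" for m
    using compact_Int_closed[OF compact_fwd[OF compact_N order.refl] closed_Int[OF frontier_closed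
        compact_imp_closed[OF compact_bwd[OF compact_N order.refl]]]]
    by (simp add: Int_ac)
  show "decseq (\<lambda>m. frontier N \<inter> fwd N m \<inter> bwd N m)"
    using decseq_fwd_N decseq_bwd_N unfolding decseq_def by blast
  have "(\<Inter>m. frontier N \<inter> fwd N m \<inter> bwd N m) = frontier N \<inter> Inv F N"
    unfolding Inv_eq by blast
  then show "(\<Inter>m. frontier N \<inter> fwd N m \<inter> bwd N m) = {}"
    using Inv_subset_interior frontier_N by blast
qed

definition fwd_union :: "'a set \<Rightarrow> nat \<Rightarrow> 'a set" where
  "fwd_union C a = (\<Union>j<a. fwd C j)"

definition P1_of :: "'a set \<Rightarrow> nat \<Rightarrow> 'a set" where
  "P1_of K a = fwd_union K a \<union> fwd N a"

lemma fwd_union_subset_N: "C \<subseteq> N \<Longrightarrow> fwd_union C a \<subseteq> N"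
  unfolding fwd_union_def using fwd_subset_N by blast

lemma compact_fwd_union: "compact C \<Longrightarrow> C \<subseteq> N \<Longrightarrow> compact (fwd_union C a)"
  unfolding fwd_union_def by (intro compact_UN) (auto intro: compact_fwd)

lemma subset_fwd_union:
  assumes "1 \<le> a"
  shows "C \<subseteq> fwd_union C a"
proof -
  have "fwd C 0 \<subseteq> fwd_union C a"
    unfolding fwd_union_def using assms by (intro UN_upper) simp
  then show ?thesis by simp
qed

lemma fwd_union_subset_invariant:
  assumes "img F P \<inter> N \<subseteq> P" and "L \<subseteq> P"
  shows "fwd_union L b \<subseteq> P"
  unfolding fwd_union_def using fwd_mono[OF assms(2)] fwd_subset_if_invariant[OF assms(1)] by blast

lemma fwd_disjoint_bwd_N:
  assumes "C \<subseteq> N" and "C \<inter> bwd N b = {}"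
  shows "fwd C j \<inter> bwd N b = {}"
proof (rule ccontr)
  assume "fwd C j \<inter> bwd N b \<noteq> {}"
  then obtain c where "c \<in> C" "c \<in> bwd N (b + j)"
    using fwd_meets_bwd[OF assms(1)] by blast
  then show False
    using assms(2) decseqD[OF decseq_bwd_N, of b "b + j"] by auto
qed

lemma fwd_union_disjoint_bwd_N:
  "C \<subseteq> N \<Longrightarrow> C \<inter> bwd N b = {} \<Longrightarrow> fwd_union C a \<inter> bwd N b = {}"
  unfolding fwd_union_def using fwd_disjoint_bwd_N by blast

text \<open>A trajectory reaching \<open>fwd C b\<close> starts in \<open>C \<inter> bwd N b = {}\<close>, so the orbit piece
  \<open>fwd_union C b\<close> is closed under one more step.\<close>

lemma fwd_union_invariant:
  assumes "C \<subseteq> N" and "C \<inter> bwd N b = {}"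
  shows "img F (fwd_union C b) \<inter> N \<subseteq> fwd_union C b"
proof
  fix y assume y: "y \<in> img F (fwd_union C b) \<inter> N"
  then obtain j where j: "j < b" "y \<in> fwd C (Suc j)"
    by (auto simp: img_def fwd_union_def)
  show "y \<in> fwd_union C b"
  proof (cases "Suc j < b")
    case True
    then show ?thesis
      using j(2) unfolding fwd_union_def by blast
  next
    case False
    then have "Suc j = b"
      using j(1) by simp
    then have "y \<in> fwd C b \<inter> bwd N 0"
      using j(2) y by simp
    then show ?thesis
      using fwd_meets_bwd[OF assms(1)] assms(2) by fastforce
  qed
qed

lemma P1_of_subset_N: "K \<subseteq> N \<Longrightarrow> P1_of K a \<subseteq> N"
  unfolding P1_of_def using fwd_union_subset_N fwd_subset_N[of N] by blast

lemma compact_P1_of: "compact K \<Longrightarrow> K \<subseteq> N \<Longrightarrow> compact (P1_of K a)"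
  unfolding P1_of_def using compact_fwd_union compact_fwd[OF compact_N] by blast

lemma subset_P1_of: "K \<subseteq> N \<Longrightarrow> K \<subseteq> P1_of K a"
  unfolding P1_of_def using subset_fwd_union[of a K] by (cases a) auto

lemma P1_of_invariant:
  assumes "K \<subseteq> N"
  shows "img F (P1_of K a) \<inter> N \<subseteq> P1_of K a"
proof
  fix y assume "y \<in> img F (P1_of K a) \<inter> N"
  then obtain x where x: "x \<in> P1_of K a" "y \<in> F x 1" "y \<in> N"
    by (auto simp: img_def)
  show "y \<in> P1_of K a"
  proof (cases "x \<in> fwd N a")
    case True
    then have "y \<in> fwd N (Suc a)"
      using x by (auto simp: img_def)
    then show ?thesis
      using decseqD[OF decseq_fwd_N, of a "Suc a"] unfolding P1_of_def by auto
  next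
    case False
    then obtain j where j: "j < a" "x \<in> fwd K j"
      using x(1) unfolding P1_of_def fwd_union_def by blast
    then have y_fwd: "y \<in> fwd K (Suc j)"
      using x by (auto simp: img_def)
    show ?thesis
    proof (cases "Suc j < a")
      case True
      then show ?thesis
        using y_fwd unfolding P1_of_def fwd_union_def by blast
    next
      case False
      then have "Suc j = a"
        using j(1) by simp
      then have "y \<in> fwd N a"
        using y_fwd fwd_mono[OF assms] by blast
      then show ?thesis
        unfolding P1_of_def by blast
    qed
  qed
qed

definition admissible :: "'a set \<Rightarrow> nat \<Rightarrow> 'a set \<Rightarrow> nat \<Rightarrow> bool" where
  "admissible K a L b \<longleftrightarrow> K \<subseteq> N \<and> compact K \<and> Inv F N \<subseteq> interior K \<and> 1 \<le> b \<and>
     compact L \<and> L \<subseteq> P1_of K a \<and> P1_of K a \<inter> frontier N \<subseteq> L \<and> L \<inter> bwd N b = {}"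

lemma admissible_weak_index_pair:
  assumes "admissible K a L b"
  shows "weak_index_pair F N (P1_of K a) (fwd_union L b)"
proof -
  note adm = assms[unfolded admissible_def]
  let ?P1 = "P1_of K a" and ?P2 = "fwd_union L b"
  have P1_N: "?P1 \<subseteq> N" and L_N: "L \<subseteq> N"
    using P1_of_subset_N adm by blast+
  have compact_P1: "compact ?P1" and compact_P2: "compact ?P2"
    using compact_P1_of compact_fwd_union adm L_N by blast+
  have inv1: "img F ?P1 \<inter> N \<subseteq> ?P1"
    using P1_of_invariant adm by blast
  have inv2: "img F ?P2 \<inter> N \<subseteq> ?P2"
    using fwd_union_invariant L_N adm by blast
  have P2_P1: "?P2 \<subseteq> ?P1"
    using fwd_union_subset_invariant[OF inv1] adm by blast
  have L_P2: "L \<subseteq> ?P2"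
    using subset_fwd_union adm by blast
  have exit_in_P2: "?P1 - interior N \<subseteq> ?P2"
    using adm P1_N L_P2 frontier_N by blast
  have "bdF F ?P1 \<subseteq> ?P1 - interior N"
  proof -
    have "img F ?P1 - ?P1 \<subseteq> - N"
      using inv1 by blast
    then have "closure (img F ?P1 - ?P1) \<subseteq> - interior N"
      by (metis closure_mono closure_complement)
    then show ?thesis
      unfolding bdF_def using compact_P1 by (simp add: compact_imp_closed) blast
  qed
  moreover have "Inv F N \<subseteq> interior (?P1 - ?P2)"
  proof -
    have "Inv F N \<subseteq> interior ?P1"
      using adm subset_P1_of[of K a] interior_mono by blast
    moreover have "Inv F N \<inter> ?P2 = {}"
      using Inv_subset_bwd_N[of b] fwd_union_disjoint_bwd_N[of L b b] L_N adm by blast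
    ultimately show ?thesis
      using compact_P2 by (simp add: interior_diff compact_imp_closed) blast
  qed
  ultimately show ?thesis
    unfolding weak_index_pair_def
    using compact_P1 compact_P2 P2_P1 P1_N inv1 inv2 exit_in_P2 by blast
qed

lemma admissible_P1_of_Int:
  assumes "K \<subseteq> N" and "compact K" and "Inv F N \<subseteq> interior K" and "1 \<le> b"
    and "closed E" and "E \<inter> bwd N b = {}"
    and "\<And>j. j < a \<Longrightarrow> fwd K j \<inter> frontier N \<inter> bwd N b = {}"
    and "fwd N a \<inter> frontier N \<inter> bwd N b = {}"
  shows "admissible K a (P1_of K a \<inter> (E \<union> - interior N)) b"
proof -
  let ?L = "P1_of K a \<inter> (E \<union> - interior N)"
  have "compact ?L"
    using compact_P1_of[OF assms(2,1)] assms(5)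
    by (intro compact_Int_closed closed_Un) auto
  moreover have "?L \<inter> bwd N b = {}"
  proof -
    have "?L \<inter> bwd N b \<subseteq> P1_of K a \<inter> frontier N \<inter> bwd N b"
      using assms(6) P1_of_subset_N[OF assms(1)] frontier_N by blast
    also have "\<dots> = {}"
      using assms(7,8) unfolding P1_of_def fwd_union_def by blast
    finally show ?thesis by blast
  qed
  ultimately show ?thesis
    unfolding admissible_def using assms(1-4) frontier_N by blast
qed

lemma exists_Inv_nbhd_fwd_disjoint:
  assumes "frontier N \<inter> fwd N m \<inter> bwd N m = {}"
  obtains K where "K \<subseteq> N" "compact K" "Inv F N \<subseteq> interior K"
    "\<And>j. j < m \<Longrightarrow> fwd K j \<inter> frontier N \<inter> bwd N m = {}"
proof -
  define Z where "Z = frontier N \<inter> bwd N m"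
  have Z_N: "Z \<subseteq> N"
    unfolding Z_def frontier_N by blast
  have "compact Z"
    using compact_Int_closed[OF compact_bwd[OF compact_N order.refl] frontier_closed, of m N]
    unfolding Z_def by (simp add: Int_commute)
  define B where "B = (\<Union>i<m. bwd Z i)"
  have "closed B"
    unfolding B_def using compact_bwd[OF \<open>compact Z\<close> Z_N]
    by (intro compact_imp_closed compact_UN) auto
  have "Inv F N \<inter> B = {}"
  proof (rule ccontr)
    assume "Inv F N \<inter> B \<noteq> {}"
    then obtain x i where "x \<in> Inv F N" "x \<in> bwd Z i"
      unfolding B_def by blast
    then obtain z where "z \<in> Z" "z \<in> fwd N (m + i)"
      using bwd_meets_fwd_N[OF Z_N] Inv_subset_fwd_N by blast
    then show False
      using assms decseqD[OF decseq_fwd_N, of m "m + i"] unfolding Z_def by auto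
  qed
  then have Inv_disjoint: "Inv F N \<inter> - (interior N - B) = {}"
    using Inv_subset_interior by blast
  have "closed (- (interior N - B))"
    using \<open>closed B\<close> by (simp add: closed_Un closed_Compl)
  then obtain E \<eta> where E: "closed E" "E \<inter> - (interior N - B) = {}" "\<eta> > 0"
    "\<forall>x\<in>Inv F N. ball x \<eta> \<subseteq> E"
    using closed_nbhd_avoiding[OF compact_Inv _ Inv_disjoint] by blast
  have E_N: "E \<subseteq> N"
    using E(2) interior_subset by blast
  show ?thesis
  proof (rule that)
    show "E \<subseteq> N" by (fact E_N)
    show "compact E"
      using compact_Int_closed[OF compact_N E(1)] E_N by (simp add: Int_absorb1)
    show "Inv F N \<subseteq> interior E"
    proof
      fix x assume "x \<in> Inv F N"
      then show "x \<in> interior E"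
        using E(3,4) mem_interior by blast
    qed
    show "fwd E j \<inter> frontier N \<inter> bwd N m = {}" if "j < m" for j
    proof (rule ccontr)
      assume "fwd E j \<inter> frontier N \<inter> bwd N m \<noteq> {}"
      then obtain y where "y \<in> fwd E j" "y \<in> bwd Z 0"
        unfolding Z_def by auto
      then obtain c where "c \<in> E" "c \<in> bwd Z (0 + j)"
        using fwd_meets_bwd[OF E_N] by blast
      then show False
        using E(2) that unfolding B_def by auto
    qed
  qed
qed

lemma exists_admissible: "\<exists>K L m. admissible K m L m"
proof -
  obtain m0 where m0: "\<And>m. m \<ge> m0 \<Longrightarrow> frontier N \<inter> fwd N m \<inter> bwd N m = {}"
    using eventually_frontier_disjoint unfolding eventually_sequentially by blast
  have isolated: "frontier N \<inter> fwd N (Suc m0) \<inter> bwd N (Suc m0) = {}"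
    by (rule m0) simp
  obtain K where K: "K \<subseteq> N" "compact K" "Inv F N \<subseteq> interior K"
    "\<And>j. j < Suc m0 \<Longrightarrow> fwd K j \<inter> frontier N \<inter> bwd N (Suc m0) = {}"
    using exists_Inv_nbhd_fwd_disjoint[OF isolated] by blast
  have "fwd N (Suc m0) \<inter> frontier N \<inter> bwd N (Suc m0) = {}"
    using isolated by (simp only: Int_commute Int_left_commute)
  then have "admissible K (Suc m0) (P1_of K (Suc m0) \<inter> ({} \<union> - interior N)) (Suc m0)"
    by (intro admissible_P1_of_Int K) simp_all
  then show ?thesis by blast
qed

lemma Inter_fwd_subset:
  assumes "\<And>k. compact (D k)" and "\<And>k. D k \<subseteq> N" and "decseq D"
  shows "(\<Inter>k. fwd (D k) j) \<subseteq> fwd (\<Inter>k. D k) j"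
proof (induction j)
  case 0
  then show ?case by simp
next
  case (Suc j)
  show ?case
  proof
    fix y assume y: "y \<in> (\<Inter>k. fwd (D k) (Suc j))"
    have "(\<Inter>k. F y (-1) \<inter> fwd (D k) j) \<noteq> {}"
    proof (rule compact_decseq_Inter_nonempty)
      show "compact (F y (-1) \<inter> fwd (D k) j)" for k
        using compact_Int_closed[OF compact_F compact_imp_closed[OF compact_fwd[OF assms(1,2)]]] .
      show "decseq (\<lambda>k. F y (-1) \<inter> fwd (D k) j)"
        using fwd_mono decseqD[OF assms(3)] unfolding decseq_def by blast
      show "F y (-1) \<inter> fwd (D k) j \<noteq> {}" for k
        using y by (auto simp: img_eq)
    qed
    then obtain c where "c \<in> F y (-1)" "\<forall>k. c \<in> fwd (D k) j"
      by blast
    moreover have "y \<in> N"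
      using y by auto
    ultimately show "y \<in> fwd (\<Inter>k. D k) (Suc j)"
      using Suc.IH F_minus_one_iff by (auto simp: img_def)
  qed
qed

lemma eventually_fwd_disjoint:
  assumes "\<And>k. compact (D k)" and "\<And>k. D k \<subseteq> N" and "decseq D" and "(\<Inter>k. D k) \<subseteq> P"
    and "img F P \<inter> N \<subseteq> P" and "closed C" and "P \<inter> C = {}"
  shows "eventually (\<lambda>k. fwd (D k) j \<inter> C = {}) sequentially"
proof (rule compact_decseq_eventually_empty)
  show "compact (fwd (D k) j \<inter> C)" for k
    using compact_Int_closed[OF compact_fwd[OF assms(1,2)] assms(6)] .
  show "decseq (\<lambda>k. fwd (D k) j \<inter> C)"
    using fwd_mono decseqD[OF assms(3)] unfolding decseq_def by blast
  have "(\<Inter>k. fwd (D k) j \<inter> C) \<subseteq> fwd P j \<inter> C"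
    using Inter_fwd_subset[OF assms(1-3)] fwd_mono[OF assms(4)] by blast
  then show "(\<Inter>k. fwd (D k) j \<inter> C) = {}"
    using fwd_subset_if_invariant[OF assms(5)] assms(7) by blast
qed

lemma exists_thickening_fwd_disjoint:
  assumes "admissible K a L b" and "P1_of K a \<noteq> {}"
  shows "\<exists>\<delta>>0. \<forall>j<a. fwd (N \<inter> {x. infdist x (P1_of K a) \<le> \<delta>}) j \<inter> frontier N \<inter> bwd N b = {}"
proof -
  note adm = assms(1)[unfolded admissible_def]
  define P where "P = P1_of K a"
  define D where "D k = N \<inter> {x. infdist x P \<le> 1 / Suc k}" for k
  have compact_D: "compact (D k)" for k
    unfolding D_def by (intro compact_Int_closed[OF compact_N] closed_Collect_le continuous_intros)
  have D_N: "D k \<subseteq> N" for k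
    unfolding D_def by blast
  have "decseq D"
  proof (rule decseq_SucI)
    show "D (Suc k) \<subseteq> D k" for k
      unfolding D_def using frac_le[of 1 1 "Suc k" "Suc (Suc k)"] by force
  qed
  have "compact P"
    unfolding P_def using compact_P1_of adm by blast
  then have "(\<Inter>k. D k) \<subseteq> P"
    using Inter_infdist_le_subset[of P] assms(2) unfolding D_def P_def
    by (auto intro: compact_imp_closed)
  moreover have "img F P \<inter> N \<subseteq> P"
    unfolding P_def using P1_of_invariant adm by blast
  moreover have "closed (frontier N \<inter> bwd N b)"
    using compact_bwd[OF compact_N order.refl] by (intro closed_Int frontier_closed compact_imp_closed)
  moreover have "P \<inter> (frontier N \<inter> bwd N b) = {}"
    unfolding P_def using adm by blast
  ultimately have "\<forall>j\<in>{..<a}. eventually (\<lambda>k. fwd (D k) j \<inter> (frontier N \<inter> bwd N b) = {}) sequentially"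
    using eventually_fwd_disjoint[OF compact_D D_N \<open>decseq D\<close>] by blast
  then have "eventually (\<lambda>k. \<forall>j\<in>{..<a}. fwd (D k) j \<inter> (frontier N \<inter> bwd N b) = {}) sequentially"
    by (intro eventually_ball_finite) auto
  then obtain k where "\<forall>j<a. fwd (D k) j \<inter> (frontier N \<inter> bwd N b) = {}"
    unfolding eventually_sequentially by auto
  then show ?thesis
    unfolding D_def P_def by (intro exI[of _ "1 / Suc k"]) (simp add: Int_assoc)
qed

lemma admissible_step:
  assumes "admissible K a L b"
  shows "\<exists>K' L'. admissible K' a L' b \<and> P1_of K a \<subseteq> intN N (P1_of K' a) \<and>
    fwd_union L b \<subseteq> intN N (fwd_union L' b)"
proof -
  let ?P = "P1_of K a" and ?P2 = "fwd_union L b"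
  have K_N: "K \<subseteq> N" and "Inv F N \<subseteq> interior K" and "1 \<le> b" and "compact L"
    and L_P: "L \<subseteq> ?P" and P_frontier: "?P \<inter> frontier N \<subseteq> L" and L_bwd: "L \<inter> bwd N b = {}"
    using assms unfolding admissible_def by blast+
  have L_N: "L \<subseteq> N" and P_N: "?P \<subseteq> N"
    using P1_of_subset_N[OF K_N] L_P by blast+
  have P2_P: "?P2 \<subseteq> ?P"
    using fwd_union_subset_invariant[OF P1_of_invariant[OF K_N] L_P] .
  show ?thesis
  proof (cases "?P = {}")
    case True
    then have "?P2 = {}"
      using P2_P by blast
    then show ?thesis
      using assms True by (intro exI[of _ K] exI[of _ L]) simp
  next
    case False
    then obtain \<delta> where "\<delta> > 0" and \<delta>:
      "\<forall>j<a. fwd (N \<inter> {x. infdist x ?P \<le> \<delta>}) j \<inter> frontier N \<inter> bwd N b = {}"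
      using exists_thickening_fwd_disjoint[OF assms False] by blast
    define K' where "K' = N \<inter> {x. infdist x ?P \<le> \<delta>}"
    have K'_N: "K' \<subseteq> N"
      unfolding K'_def by blast
    have "compact K'"
      unfolding K'_def by (intro compact_Int_closed[OF compact_N] closed_Collect_le continuous_intros)
    have ball_K': "N \<inter> ball x \<delta> \<subseteq> K'" if "x \<in> ?P" for x
    proof
      fix y assume "y \<in> N \<inter> ball x \<delta>"
      then show "y \<in> K'"
        using infdist_le[OF that, of y] unfolding K'_def by (simp add: dist_commute)
    qed
    obtain E \<eta> where E: "closed E" "E \<inter> bwd N b = {}" "\<eta> > 0" "\<forall>x\<in>?P2. ball x \<eta> \<subseteq> E"
      using closed_nbhd_avoiding[OF compact_fwd_union[OF \<open>compact L\<close> L_N, of b]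
          compact_imp_closed[OF compact_bwd[OF compact_N order.refl, of b]]
          fwd_union_disjoint_bwd_N[OF L_N L_bwd, of b]]
      by blast
    define L' where "L' = P1_of K' a \<inter> (E \<union> - interior N)"
    have "admissible K' a L' b"
      unfolding L'_def
    proof (rule admissible_P1_of_Int[OF K'_N \<open>compact K'\<close> _ \<open>1 \<le> b\<close> E(1,2)])
      have "?P \<subseteq> K'"
        unfolding K'_def using P_N \<open>\<delta> > 0\<close> by auto
      then have "K \<subseteq> K'"
        using subset_P1_of[OF K_N] by blast
      then show "Inv F N \<subseteq> interior K'"
        using \<open>Inv F N \<subseteq> interior K\<close> interior_mono by blast
      show "fwd K' j \<inter> frontier N \<inter> bwd N b = {}" if "j < a" for j
        using \<delta> that unfolding K'_def by blast
      show "fwd N a \<inter> frontier N \<inter> bwd N b = {}"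
        using P_frontier L_bwd unfolding P1_of_def by blast
    qed
    moreover have "?P \<subseteq> intN N (P1_of K' a)"
    proof
      fix x assume x: "x \<in> ?P"
      have "N \<inter> ball x \<delta> \<subseteq> P1_of K' a"
        using ball_K'[OF x] subset_P1_of[OF K'_N] by blast
      then show "x \<in> intN N (P1_of K' a)"
        using x P_N \<open>\<delta> > 0\<close> by (intro in_intN_ballI[of x N \<delta>]) blast+
    qed
    moreover have "?P2 \<subseteq> intN N (fwd_union L' b)"
    proof
      fix x assume x: "x \<in> ?P2"
      have "N \<inter> ball x (min \<delta> \<eta>) \<subseteq> P1_of K' a \<inter> E"
        using ball_K'[of x] E(4) x P2_P subset_P1_of[OF K'_N] by fastforce
      also have "\<dots> \<subseteq> fwd_union L' b"
        using subset_fwd_union[OF \<open>1 \<le> b\<close>, of L'] unfolding L'_def by blast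
      finally show "x \<in> intN N (fwd_union L' b)"
        using x P2_P P_N \<open>\<delta> > 0\<close> E(3) by (intro in_intN_ballI[of x N "min \<delta> \<eta>"]) auto
    qed
    ultimately show ?thesis
      by blast
  qed
qed

end

theorem mainTheorem6:
  fixes F :: "'a::metric_space \<Rightarrow> int \<Rightarrow> 'a set" and N :: "'a set" and n :: nat
  assumes "locally_compact_space (euclidean :: 'a topology)"
    and "dmds F"
    and "isolating_nbhd F N"
  shows "\<exists>P1 P2 :: nat \<Rightarrow> 'a set.
           (\<forall>i\<in>{1..n}. weak_index_pair F N (P1 i) (P2 i)) \<and>
           (\<forall>i\<in>{1..<n}. P1 i \<subseteq> intN N (P1 (Suc i)) \<and> P2 i \<subseteq> intN N (P2 (Suc i)))"
proof -
  interpret isolated_dmds F N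
    using assms(2,3) by (rule isolated_dmds.intro)
  obtain K L m where "admissible K m L m"
    using exists_admissible by blast
  define nested where "nested p q \<longleftrightarrow> P1_of (fst p) m \<subseteq> intN N (P1_of (fst q) m) \<and>
    fwd_union (snd p) m \<subseteq> intN N (fwd_union (snd q) m)" for p q
  have "\<exists>q. admissible (fst q) m (snd q) m \<and> nested p q"
    if adm: "admissible (fst p) m (snd p) m" for p
  proof -
    obtain K' L' where "admissible K' m L' m" "nested p (K', L')"
      using admissible_step[OF adm] unfolding nested_def by auto
    then show ?thesis
      by (intro exI[of _ "(K', L')"]) simp
  qed
  then obtain s where s: "\<forall>i. admissible (fst (s i)) m (snd (s i)) m \<and> nested (s i) (s (Suc i))"
    using dependent_nat_choice[of "\<lambda>_ p. admissible (fst p) m (snd p) m" "\<lambda>_. nested"]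
      \<open>admissible K m L m\<close> by force
  show ?thesis
  proof (intro exI conjI)
    show "\<forall>i\<in>{1..n}. weak_index_pair F N (P1_of (fst (s i)) m) (fwd_union (snd (s i)) m)"
      using s admissible_weak_index_pair by blast
    show "\<forall>i\<in>{1..<n}. P1_of (fst (s i)) m \<subseteq> intN N (P1_of (fst (s (Suc i))) m) \<and>
        fwd_union (snd (s i)) m \<subseteq> intN N (fwd_union (snd (s (Suc i))) m)"
      using s unfolding nested_def by blast
  qed
qed

end
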